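(* Let $(Y,d)$ be a length space and $y_0\in Y$. Equip $Y\times\mathbb{R}$ with the product metric $\big((y,t),(y',t')\big)\mapsto\sqrt{d(y,y')^2+|t-t'|^2}$, and let $B_{(y_0,0)}(s)$ denote the open ball of radius $s$ about $(y_0,0)$ in this metric. If $L>0$ and $0<r<\min\{\tfrac12\mathrm{Diam}(Y,d),\,L\}$, then $B_{(y_0,0)}(L)-B_{(y_0,0)}(r)$ is path connected.
   Context: A metric space $(Y,d)$ is called a length space if for all $x,y\in Y$ there is a path $\gamma_0$ from $x$ to $y$ whose length (the supremum over partitions $a=t_0<\dots<t_n=b$ of $\sum_i d(\gamma(t_i),\gamma(t_{i+1}))$) equals $d(x,y)<\infty$. $\mathrm{Diam}(Y,d)$ may be $+\infty$. *)

theory Defs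
  imports "HOL-Analysis.Analysis" "HOL-Library.Extended_Real"
begin

definition curve_length :: "(real \<Rightarrow> 'a::metric_space) \<Rightarrow> real \<Rightarrow> real \<Rightarrow> ereal" where
  "curve_length \<gamma> a b =
     (SUP p \<in> {(n, t). 0 < n \<and> t 0 = a \<and> t n = b \<and> (\<forall>i<n. t i < t (Suc i))}.
        ereal (\<Sum>i<fst p. dist (\<gamma> (snd p i)) (\<gamma> (snd p (Suc i)))))"

definition length_space :: "'a::metric_space set \<Rightarrow> bool" where
  "length_space Y \<longleftrightarrow>
     (\<forall>x\<in>Y. \<forall>y\<in>Y. \<exists>a b (\<gamma>::real \<Rightarrow> 'a). a < b \<and> continuous_on {a..b} \<gamma> \<and>
        \<gamma> ` {a..b} \<subseteq> Y \<and> \<gamma> a = x \<and> \<gamma> b = y \<and> curve_length \<gamma> a b = ereal (dist x y))"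

definition Diam :: "'a::metric_space set \<Rightarrow> ereal" where
  "Diam Y = (SUP p \<in> Y \<times> Y. ereal (dist (fst p) (snd p)))"

end

theory Submission
  imports Defs
begin

text \<open>Every point (y, t) of the annulus A, at distance n from (y0, 0), is joined within A to the
  pole (y0, \<plusminus>r) on the side of t: lift a geodesic \<gamma> from y0 to y to the sphere of radius n by
  s \<mapsto> (\<gamma> s, \<plusminus>sqrt (n^2 - d(y0, \<gamma> s)^2)), then descend vertically. The two poles are joined
  through a point (m, 0) with d(y0, m) = r: since r < Diam/2 some point lies farther than r
  from y0, and the distance to y0 varies continuously along a geodesic to it.\<close>

lemma two_point_sum_le_curve_length:
  assumes "a < s" "s < b"
  shows "ereal (dist (\<gamma> a) (\<gamma> s) + dist (\<gamma> s) (\<gamma> b)) \<le> curve_length \<gamma> a b"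
proof -
  define t where "t = (\<lambda>i::nat. if i = 0 then a else if i = 1 then s else b)"
  have "(2::nat, t) \<in> {(n, t). 0 < n \<and> t 0 = a \<and> t n = b \<and> (\<forall>i<n. t i < t (Suc i))}"
    using assms by (auto simp: t_def less_2_cases_iff)
  then have "ereal (\<Sum>i<fst (2::nat, t). dist (\<gamma> (snd (2::nat, t) i)) (\<gamma> (snd (2::nat, t) (Suc i))))
      \<le> curve_length \<gamma> a b"
    unfolding curve_length_def by (rule SUP_upper)
  then show ?thesis by (simp add: t_def numeral_2_eq_2)
qed

lemma length_space_geodesic:
  fixes x y :: "'a::metric_space"
  assumes "length_space (UNIV :: 'a set)"
  obtains a b and \<gamma> :: "real \<Rightarrow> 'a" where "a < b" "continuous_on {a..b} \<gamma>" "\<gamma> a = x" "\<gamma> b = y"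
    "\<And>s. s \<in> {a..b} \<Longrightarrow> dist x (\<gamma> s) + dist (\<gamma> s) y \<le> dist x y"
proof -
  obtain a b and \<gamma> :: "real \<Rightarrow> 'a" where ab: "a < b" "continuous_on {a..b} \<gamma>"
      "\<gamma> a = x" "\<gamma> b = y" and len: "curve_length \<gamma> a b = ereal (dist x y)"
    using assms unfolding length_space_def by blast
  have between: "dist x (\<gamma> s) + dist (\<gamma> s) y \<le> dist x y" if "s \<in> {a..b}" for s
  proof (cases "s = a \<or> s = b")
    case True
    then show ?thesis using ab by auto
  next
    case False
    then have "a < s" "s < b" using that by auto
    then show ?thesis
      using two_point_sum_le_curve_length[of a s b \<gamma>] ab len by simp
  qed
  show thesis using that[OF ab between] .
qed

lemma path_component_continuous_image_interval:
  fixes f :: "real \<Rightarrow> 'a::topological_space"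
  assumes "a \<le> b" "continuous_on {a..b} f" "f ` {a..b} \<subseteq> S"
  shows "path_component S (f a) (f b)"
proof -
  have "path_connected (f ` {a..b})"
    by (rule path_connected_continuous_image[OF assms(2)]) (simp add: convex_imp_path_connected)
  then have "path_component (f ` {a..b}) (f a) (f b)"
    using assms(1) by (simp add: path_connected_component)
  then show ?thesis by (rule path_component_of_subset[OF assms(3)])
qed

lemma exists_dist_eq_in_length_space:
  fixes y0 y1 :: "'a::metric_space"
  assumes "length_space (UNIV :: 'a set)" "0 \<le> r" "r \<le> dist y0 y1"
  obtains m where "dist y0 m = r"
proof -
  obtain a b and \<gamma> :: "real \<Rightarrow> 'a" where ab: "a < b" "continuous_on {a..b} \<gamma>" "\<gamma> a = y0" "\<gamma> b = y1"
    using length_space_geodesic[OF assms(1)] by metis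
  have "continuous_on {a..b} (\<lambda>s. dist y0 (\<gamma> s))"
    by (intro continuous_intros ab(2))
  then obtain s where "dist y0 (\<gamma> s) = r"
    using IVT'[of "\<lambda>s. dist y0 (\<gamma> s)" a r b] ab assms(2,3) by auto
  then show thesis by (rule that)
qed

lemma exists_far_point_if_Diam_gt:
  fixes y0 :: "'a::metric_space"
  assumes "ereal r < Diam (UNIV :: 'a set) / 2"
  obtains y1 where "r < dist y0 y1"
proof -
  have "ereal (2 * r) < Diam (UNIV :: 'a set)"
    using assms by (cases "Diam (UNIV :: 'a set)") auto
  then obtain p q :: 'a where "2 * r < dist p q"
    unfolding Diam_def by (auto simp: less_SUP_iff)
  moreover have "dist p q \<le> dist y0 p + dist y0 q"
    by (metis dist_commute dist_triangle)
  ultimately have "r < dist y0 p \<or> r < dist y0 q" by linarith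
  then show thesis using that by blast
qed

lemma path_component_annulus_vertical:
  fixes y0 :: "'a::metric_space"
  assumes "\<sigma> \<in> {-1, 1}" "0 < r" "r \<le> n" "n < L"
  shows "path_component (ball (y0, 0::real) L - ball (y0, 0) r) (y0, \<sigma> * r) (y0, \<sigma> * n)"
proof -
  have "(\<lambda>s. (y0, \<sigma> * s)) ` {r..n} \<subseteq> ball (y0, 0::real) L - ball (y0, 0) r"
    using assms by (auto simp: dist_Pair_Pair dist_real_def abs_mult)
  moreover have "continuous_on {r..n} (\<lambda>s. (y0, \<sigma> * s))"
    by (intro continuous_intros)
  ultimately show ?thesis
    using path_component_continuous_image_interval[of r n "\<lambda>s. (y0, \<sigma> * s)"] assms(3) by simp
qed

lemma path_component_annulus_lift_geodesic:
  fixes y0 y :: "'a::metric_space"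
  assumes "length_space (UNIV :: 'a set)" "\<sigma> \<in> {-1, 1}" "0 \<le> \<sigma> * t"
    and z: "(y, t) \<in> ball (y0, 0::real) L - ball (y0, 0) r"
  defines "n \<equiv> dist (y0, 0::real) (y, t)"
  shows "path_component (ball (y0, 0::real) L - ball (y0, 0) r) (y0, \<sigma> * n) (y, t)"
proof -
  let ?A = "ball (y0, 0::real) L - ball (y0, 0) r"
  have n: "n = sqrt ((dist y0 y)\<^sup>2 + t\<^sup>2)"
    by (simp add: n_def dist_Pair_Pair dist_real_def)
  have "r \<le> n" "n < L" "0 \<le> n" using z by (auto simp: n_def)
  have "dist y0 y \<le> n" unfolding n by (rule real_le_rsqrt) simp
  obtain a b and \<gamma> :: "real \<Rightarrow> 'a" where ab: "a < b" "continuous_on {a..b} \<gamma>" "\<gamma> a = y0" "\<gamma> b = y"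
    and geo: "\<And>s. s \<in> {a..b} \<Longrightarrow> dist y0 (\<gamma> s) + dist (\<gamma> s) y \<le> dist y0 y"
    using length_space_geodesic[OF assms(1)] by metis
  define f where "f = (\<lambda>s. (\<gamma> s, \<sigma> * sqrt (n\<^sup>2 - (dist y0 (\<gamma> s))\<^sup>2)))"
  have in_A: "f s \<in> ?A" if s: "s \<in> {a..b}" for s
  proof -
    have "dist y0 (\<gamma> s) \<le> n"
      using geo[OF s] \<open>dist y0 y \<le> n\<close> zero_le_dist[of "\<gamma> s" y] by linarith
    then have "(dist y0 (\<gamma> s))\<^sup>2 \<le> n\<^sup>2" by (intro power_mono) auto
    moreover have "\<sigma>\<^sup>2 = 1" using assms(2) by auto
    ultimately have "dist (y0, 0::real) (f s) = n"
      by (simp add: f_def dist_Pair_Pair dist_real_def power_mult_distrib \<open>0 \<le> n\<close>)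
    then show ?thesis using \<open>r \<le> n\<close> \<open>n < L\<close> by simp
  qed
  have "continuous_on {a..b} f"
    unfolding f_def by (intro continuous_intros ab(2))
  moreover have "f ` {a..b} \<subseteq> ?A" using in_A by blast
  ultimately have "path_component ?A (f a) (f b)"
    using ab(1) by (intro path_component_continuous_image_interval) auto
  moreover have "f a = (y0, \<sigma> * n)" using ab \<open>0 \<le> n\<close> by (simp add: f_def)
  moreover have "\<sigma> * \<bar>t\<bar> = t" using assms(2,3) by (auto simp: zero_le_mult_iff)
  then have "f b = (y, t)" using ab by (simp add: f_def n)
  ultimately show ?thesis by simp
qed

lemma path_component_annulus_pole:
  fixes y0 y :: "'a::metric_space"
  assumes "length_space (UNIV :: 'a set)" "\<sigma> \<in> {-1, 1}" "0 \<le> \<sigma> * t" "0 < r"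
    and "(y, t) \<in> ball (y0, 0::real) L - ball (y0, 0) r"
  shows "path_component (ball (y0, 0::real) L - ball (y0, 0) r) (y0, \<sigma> * r) (y, t)"
  using path_component_trans[OF path_component_annulus_vertical
      path_component_annulus_lift_geodesic[OF assms(1-3,5)]] assms(2,4,5)
  by auto

theorem mainTheorem4:
  fixes y0 :: "'a::metric_space" and L r :: real
  assumes "length_space (UNIV :: 'a set)"
    and "L > 0" and "0 < r"
    and "ereal r < Diam (UNIV :: 'a set) / 2" and "r < L"
  shows "path_connected (ball (y0, 0::real) L - ball (y0, 0) r)"
proof -
  let ?A = "ball (y0, 0::real) L - ball (y0, 0) r"
  obtain y1 where "r < dist y0 y1"
    using exists_far_point_if_Diam_gt[OF assms(4)] .
  then obtain m where "dist y0 m = r"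
    using exists_dist_eq_in_length_space[OF assms(1)] assms(3) by (metis less_imp_le)
  then have m: "(m, 0) \<in> ?A" using assms(3,5) by (simp add: dist_Pair_Pair)
  have "path_component ?A (y0, r) (m, 0)" "path_component ?A (y0, - r) (m, 0)"
    using path_component_annulus_pole[OF assms(1), of 1 0 r m y0 L]
      path_component_annulus_pole[OF assms(1), of "-1" 0 r m y0 L] m assms(3) by simp_all
  then have poles: "path_component ?A (y0, r) (y0, - r)"
    by (rule path_component_trans[OF _ path_component_sym])
  have to_pole: "path_component ?A (y0, r) z" if "z \<in> ?A" for z
  proof (cases "0 \<le> snd z")
    case True
    then show ?thesis
      using path_component_annulus_pole[OF assms(1), of 1 "snd z" r "fst z" y0 L] that assms(3)
      by simp
  next
    case False
    then show ?thesis
      using path_component_annulus_pole[OF assms(1), of "-1" "snd z" r "fst z" y0 L] that assms(3)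
        path_component_trans[OF poles]
      by simp
  qed
  then show ?thesis
    unfolding path_connected_component
    by (blast intro: path_component_trans[OF path_component_sym[OF to_pole] to_pole])
qed

end
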